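(* Let $q$ be a prime power, $n\ge 1$, and $k\ge1$ an integer with $q>2k+1$. Then \[\dim(\operatorname{Hull}(C_{n,k}^q))=\dim(C_{n,k}^q)-1=\binom{n+k}{k}-1.\] Moreover, $\{\operatorname{ev}(m)\}_{m\in\mathcal{M}}$ is a basis of $\operatorname{Hull}(C_{n,k}^q)$, where $\mathcal{M}$ is the set of all monomials of degree $k$ in $x_0,\dots,x_n$ other than $x_n^k$.
   Context: For a prime power $q$ and integers $n\ge 1$, $k\ge 0$, the projective Reed-Muller code $C_{n,k}^q\subseteq \mathbb{F}_q^N$, $N=\frac{q^{n+1}-1}{q-1}$, is defined as follows. For each point of $\mathbb{P}^n(\mathbb{F}_q)$ choose the affine representative $(p_0,\dots,p_n)\in\mathbb{F}_q^{n+1}\setminus\{0\}$ whose left-most nonzero coordinate equals $1$, and fix an ordering $P_1',\dots,P_N'$ of these representatives; for a polynomial $F$ write $\operatorname{ev}(F)=(F(P_1'),\dots,F(P_N'))$. Then $C_{n,k}^q=\{\operatorname{ev}(F) : F\in \mathbb{F}_q[x_0,\dots,x_n]_k\}$, where $\mathbb{F}_q[x_0,\dots,x_n]_k$ is the space of homogeneous polynomials of degree $k$ together with $0$. Duals are with respect to the standard dot product, and $\operatorname{Hull}(C)=C\cap C^\perp$. *)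

theory Defs
  imports Complex_Main "HOL-Library.Function_Algebras"
begin

text \<open>Points of P^n(F_q) are represented by their normalized affine representatives
p :: nat => 'a with p i = 0 for i > n, p not identically zero on 0..n, and
left-most nonzero coordinate equal to 1. Words of F_q^N are functions from
these representatives to 'a (zero outside the set of representatives).\<close>

definition proj_pts :: "nat \<Rightarrow> (nat \<Rightarrow> 'a::field) set" where
  "proj_pts n = {p. (\<forall>i>n. p i = 0) \<and> (\<exists>i\<le>n. p i \<noteq> 0) \<and>
                    p (LEAST i. p i \<noteq> 0) = 1}"

definition hmonos :: "nat \<Rightarrow> nat \<Rightarrow> (nat \<Rightarrow> nat) set" where
  "hmonos n k = {e. (\<forall>i>n. e i = 0) \<and> (\<Sum>i\<le>n. e i) = k}"

definition mono_eval :: "nat \<Rightarrow> (nat \<Rightarrow> nat) \<Rightarrow> (nat \<Rightarrow> 'a::field) \<Rightarrow> 'a" where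
  "mono_eval n e p = (\<Prod>i\<le>n. p i ^ e i)"

definition hom_eval :: "nat \<Rightarrow> nat \<Rightarrow> ((nat \<Rightarrow> nat) \<Rightarrow> 'a::field) \<Rightarrow> (nat \<Rightarrow> 'a) \<Rightarrow> 'a" where
  "hom_eval n k c p = (\<Sum>e\<in>hmonos n k. c e * mono_eval n e p)"

definition ev :: "nat \<Rightarrow> ((nat \<Rightarrow> 'a::field) \<Rightarrow> 'a) \<Rightarrow> ((nat \<Rightarrow> 'a) \<Rightarrow> 'a)" where
  "ev n F = (\<lambda>P. if P \<in> proj_pts n then F P else 0)"

definition PRM :: "nat \<Rightarrow> nat \<Rightarrow> ((nat \<Rightarrow> 'a::field) \<Rightarrow> 'a) set" where
  "PRM n k = {ev n (hom_eval n k c) | c. True}"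

definition words :: "nat \<Rightarrow> ((nat \<Rightarrow> 'a::field) \<Rightarrow> 'a) set" where
  "words n = {v. \<forall>P. P \<notin> proj_pts n \<longrightarrow> v P = 0}"

definition dotp :: "nat \<Rightarrow> ((nat \<Rightarrow> 'a::field) \<Rightarrow> 'a) \<Rightarrow> ((nat \<Rightarrow> 'a) \<Rightarrow> 'a) \<Rightarrow> 'a" where
  "dotp n u v = (\<Sum>P\<in>proj_pts n. u P * v P)"

definition dual_code :: "nat \<Rightarrow> ((nat \<Rightarrow> 'a::field) \<Rightarrow> 'a) set \<Rightarrow> ((nat \<Rightarrow> 'a) \<Rightarrow> 'a) set" where
  "dual_code n C = {v \<in> words n. \<forall>u\<in>C. dotp n u v = 0}"

definition code_hull :: "nat \<Rightarrow> ((nat \<Rightarrow> 'a::field) \<Rightarrow> 'a) set \<Rightarrow> ((nat \<Rightarrow> 'a) \<Rightarrow> 'a) set" where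
  "code_hull n C = C \<inter> dual_code n C"

definition fscale :: "'a::field \<Rightarrow> ('b \<Rightarrow> 'a) \<Rightarrow> ('b \<Rightarrow> 'a)" where
  "fscale c f = (\<lambda>x. c * f x)"

lemma vector_space_fscale: "vector_space (fscale :: 'a::field \<Rightarrow> ('b \<Rightarrow> 'a) \<Rightarrow> _)"
  by unfold_locales (auto simp: fscale_def algebra_simps)

end

theory Submission
  imports Defs "HOL-Computational_Algebra.Polynomial" "HOL-Library.Cardinality" "HOL-Library.FuncSet"
begin

text \<open>
  For monomials \<open>x\<^sup>e\<close>, \<open>x\<^sup>e\<^sup>'\<close> of degree \<open>k\<close>, the sum of \<open>x\<^sup>e\<^sup>+\<^sup>e\<^sup>'\<close> over the normalized
  projective points is computed by splitting off the point \<open>[0 : \<dots> : 0 : 1]\<close>: the other points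
  are \<open>(P, t)\<close> with \<open>P\<^sub>n = 0\<close> and \<open>t\<close> running over \<open>\<bbbF>\<^sub>q\<close> in the last coordinate, and
  \<open>\<Sum>\<^sub>t t\<^sup>a = 0\<close> for \<open>a < q - 1\<close>. Since \<open>e\<^sub>n + e'\<^sub>n \<le> 2k < q - 1\<close>, only the point
  \<open>[0 : \<dots> : 0 : 1]\<close> contributes, and only when \<open>e = e' = x\<^sub>n\<^sup>k\<close>. Hence
  \<open>ev F \<cdot> ev G\<close> is the product of the \<open>x\<^sub>n\<^sup>k\<close>-coefficients of \<open>F\<close> and \<open>G\<close>, and the hull consists of
  the evaluations of the forms without an \<open>x\<^sub>n\<^sup>k\<close> term.

  For the dimensions, the evaluated monomials are linearly independent because \<open>k < q\<close>: a form
  vanishing on all projective points vanishes on all of \<open>\<bbbF>\<^sub>q\<^sup>n\<^sup>+\<^sup>1\<close> by homogeneity, and a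
  polynomial function with all exponents below \<open>q\<close> that vanishes identically is the zero
  polynomial.
\<close>

section \<open>Power sums and polynomial functions over a finite field\<close>

lemma of_nat_CARD_eq_0: "of_nat CARD('a) = (0 :: 'a :: {ring_1,finite})"
proof -
  have "(\<Sum>t\<in>UNIV. t) = (\<Sum>t\<in>UNIV. t + (1 :: 'a))"
    by (rule sum.reindex_bij_witness[of _ "\<lambda>t. t + 1" "\<lambda>t. t - 1"]) auto
  also have "\<dots> = (\<Sum>t\<in>UNIV. t) + of_nat CARD('a)"
    by (simp add: sum.distrib)
  finally show ?thesis by simp
qed

lemma sum_UNIV_power_eq_0:
  assumes "a < CARD('a) - 1"
  shows "(\<Sum>t\<in>UNIV. t ^ a) = (0 :: 'a :: {field,finite})"
proof (cases "a = 0")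
  case True
  then show ?thesis by (simp add: of_nat_CARD_eq_0)
next
  case False
  \<comment> \<open>\<open>X ^ a - 1\<close> has at most \<open>a\<close> roots, fewer than the \<open>q - 1\<close> units\<close>
  have "\<exists>g::'a. g \<noteq> 0 \<and> g ^ a \<noteq> 1"
  proof (rule ccontr)
    define p :: "'a poly" where "p = monom 1 a - 1"
    have "coeff p a = 1"
      using False by (simp add: p_def)
    then have "p \<noteq> 0" by auto
    have "degree p \<le> a"
      unfolding p_def by (intro degree_diff_le) (auto simp: degree_monom_le)
    assume "\<not> ?thesis"
    then have "UNIV - {0} \<subseteq> {x. poly p x = 0}"
      by (auto simp: p_def poly_monom)
    then have "card (UNIV - {0::'a}) \<le> card {x. poly p x = 0}"
      by (intro card_mono) auto
    then have "CARD('a) - 1 \<le> card {x. poly p x = 0}"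
      by (simp add: card_Diff_singleton)
    also have "\<dots> \<le> a"
      using card_poly_roots_bound[OF \<open>p \<noteq> 0\<close>] \<open>degree p \<le> a\<close> by linarith
    finally show False using assms by linarith
  qed
  then obtain g :: 'a where g: "g \<noteq> 0" "g ^ a \<noteq> 1" by blast
  have "(\<Sum>t\<in>UNIV. t ^ a) = (\<Sum>t\<in>UNIV. (g * t) ^ a)"
    by (rule sum.reindex_bij_witness[of _ "\<lambda>t. g * t" "\<lambda>t. t / g"]) (use g in auto)
  also have "\<dots> = g ^ a * (\<Sum>t\<in>UNIV. t ^ a)"
    by (simp add: power_mult_distrib sum_distrib_left)
  finally have "(g ^ a - 1) * (\<Sum>t\<in>UNIV. t ^ a) = 0"
    by (simp add: algebra_simps)
  with g show ?thesis by simp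
qed

lemma poly_eq_0_if_vanishes_on_finite_field:
  fixes p :: "'a :: {field,finite} poly"
  assumes "\<And>t. poly p t = 0" and "degree p < CARD('a)"
  shows "p = 0"
proof (rule ccontr)
  assume "p \<noteq> 0"
  then have "card {t. poly p t = 0} \<le> degree p"
    by (rule card_poly_roots_bound)
  with assms show False by simp
qed

lemma coeffs_eq_0_if_sum_powers_vanish:
  fixes b :: "nat \<Rightarrow> 'a :: {field,finite}"
  assumes "\<And>t. (\<Sum>d<CARD('a). b d * t ^ d) = 0" and "d < CARD('a)"
  shows "b d = 0"
proof -
  define p :: "'a poly" where "p = (\<Sum>d<CARD('a). monom (b d) d)"
  have coeff_p: "coeff p i = (if i < CARD('a) then b i else 0)" for i
    by (simp add: p_def coeff_sum coeff_monom)
  have "degree p < CARD('a)"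
    using coeff_p by (intro degree_lessI) (auto simp: card_gt_0_iff)
  moreover have "poly p t = 0" for t
    using assms(1)[of t] by (simp add: p_def poly_sum poly_monom)
  ultimately have "p = 0"
    using poly_eq_0_if_vanishes_on_finite_field by blast
  with coeff_p[of d] assms(2) show ?thesis by simp
qed

lemma reduced_poly_fun_slice_vanishes:
  fixes c :: "(nat \<Rightarrow> nat) \<Rightarrow> 'a :: {field,finite}"
  assumes "finite A" and "finite V" and "v \<notin> V"
    and "\<forall>e\<in>A. e v < CARD('a)"
    and "\<forall>p. (\<Sum>e\<in>A. c e * (\<Prod>i\<in>insert v V. p i ^ e i)) = 0"
    and "d < CARD('a)"
  shows "(\<Sum>e\<in>{e \<in> A. e v = d}. c e * (\<Prod>i\<in>V. p i ^ e i)) = 0"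
proof -
  define b where "b d = (\<Sum>e\<in>{e \<in> A. e v = d}. c e * (\<Prod>i\<in>V. p i ^ e i))" for d
  have "(\<Sum>d<CARD('a). b d * t ^ d) = 0" for t
  proof -
    have "(\<Sum>d<CARD('a). b d * t ^ d)
        = (\<Sum>d<CARD('a). \<Sum>e\<in>{e \<in> A. e v = d}. c e * (\<Prod>i\<in>V. p i ^ e i) * t ^ e v)"
      by (simp add: b_def sum_distrib_right)
    also have "\<dots> = (\<Sum>e\<in>A. c e * (\<Prod>i\<in>V. p i ^ e i) * t ^ e v)"
      by (rule sum.group) (use assms(1,4) in auto)
    also have "\<dots> = (\<Sum>e\<in>A. c e * (\<Prod>i\<in>insert v V. (p(v := t)) i ^ e i))"
    proof -
      have "(\<Prod>i\<in>V. (p(v := t)) i ^ e i) = (\<Prod>i\<in>V. p i ^ e i)" for e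
        using assms(3) by (intro prod.cong) auto
      then show ?thesis
        using assms(2,3) by (simp add: mult_ac)
    qed
    also have "\<dots> = 0"
      using assms(5) by blast
    finally show ?thesis .
  qed
  then have "b d = 0"
    using assms(6) by (rule coeffs_eq_0_if_sum_powers_vanish)
  then show ?thesis
    by (simp add: b_def)
qed

lemma coeff_eq_0_if_reduced_poly_fun_vanishes:
  fixes c :: "(nat \<Rightarrow> nat) \<Rightarrow> 'a :: {field,finite}"
  assumes "finite V" and "finite A" and "inj_on (\<lambda>e. restrict e V) A"
    and "\<forall>e\<in>A. \<forall>i\<in>V. e i < CARD('a)"
    and "\<forall>p. (\<Sum>e\<in>A. c e * (\<Prod>i\<in>V. p i ^ e i)) = 0"
    and "e \<in> A"
  shows "c e = 0"
  using assms
proof (induction V arbitrary: A e rule: finite_induct)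
  case empty
  have "e' = e" if "e' \<in> A" for e'
    by (rule inj_onD[OF empty.prems(2)]) (use that empty.prems(5) in \<open>auto simp: restrict_def\<close>)
  then have "A = {e}"
    using empty.prems(5) by blast
  with empty.prems(4) show ?case by simp
next
  case (insert v V)
  \<comment> \<open>the terms with a fixed exponent of \<open>x\<^sub>v\<close> form a polynomial in the remaining variables\<close>
  define A_at where "A_at = {e' \<in> A. e' v = e v}"
  have vanish: "\<forall>p. (\<Sum>e'\<in>A_at. c e' * (\<Prod>i\<in>V. p i ^ e' i)) = 0"
    unfolding A_at_def using insert.prems(1,3,4,5) insert.hyps
    by (intro allI reduced_poly_fun_slice_vanishes) auto
  have inj: "inj_on (\<lambda>e. restrict e V) A_at"
  proof (rule inj_onI)
    fix e1 e2 assume "e1 \<in> A_at" "e2 \<in> A_at" and eq: "restrict e1 V = restrict e2 V"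
    have "e1 i = e2 i" if "i \<in> insert v V" for i
      using that fun_cong[OF eq, of i] \<open>e1 \<in> A_at\<close> \<open>e2 \<in> A_at\<close> by (auto simp: A_at_def)
    then have "restrict e1 (insert v V) = restrict e2 (insert v V)"
      by (intro restrict_ext)
    then show "e1 = e2"
      using insert.prems(2) \<open>e1 \<in> A_at\<close> \<open>e2 \<in> A_at\<close> unfolding A_at_def by (blast dest: inj_onD)
  qed
  show ?case
    by (rule insert.IH[OF _ inj _ vanish]) (use insert.prems in \<open>auto simp: A_at_def\<close>)
qed

section \<open>Homogeneous polynomials on projective space\<close>

lemma proj_pts_iff:
  "P \<in> proj_pts n \<longleftrightarrow> (\<forall>i>n. P i = 0) \<and> (\<exists>j\<le>n. P j = 1 \<and> (\<forall>i<j. P i = 0))"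
proof
  assume P: "P \<in> proj_pts n"
  then obtain i where i: "i \<le> n" "P i \<noteq> 0"
    by (auto simp: proj_pts_def)
  define j where "j = (LEAST i. P i \<noteq> 0)"
  have "j \<le> i"
    unfolding j_def using i by (intro Least_le) auto
  moreover have "\<forall>i'<j. P i' = 0"
    unfolding j_def using not_less_Least by blast
  moreover have "P j = 1" "\<forall>i>n. P i = 0"
    using P by (simp_all add: proj_pts_def j_def)
  ultimately show "(\<forall>i>n. P i = 0) \<and> (\<exists>j\<le>n. P j = 1 \<and> (\<forall>i<j. P i = 0))"
    using i(1) by (blast intro: le_trans)
next
  assume "(\<forall>i>n. P i = 0) \<and> (\<exists>j\<le>n. P j = 1 \<and> (\<forall>i<j. P i = 0))"
  then obtain j where j: "\<forall>i>n. P i = 0" "j \<le> n" "P j = 1" "\<forall>i<j. P i = 0"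
    by blast
  have "(LEAST i. P i \<noteq> 0) = j"
    by (rule Least_equality) (use j in \<open>auto simp: not_less[symmetric]\<close>)
  moreover have "\<exists>i\<le>n. P i \<noteq> 0"
    using j by (intro exI[of _ j]) simp
  ultimately show "P \<in> proj_pts n"
    using j(1,3) unfolding proj_pts_def by simp
qed

lemma finite_proj_pts: "finite (proj_pts n :: (nat \<Rightarrow> 'a :: {field,finite}) set)"
  by (rule finite_subset[OF _ finite_set_of_finite_funs[of "{..n}" UNIV 0]])
     (auto simp: proj_pts_def)

lemma hmonos_exponent_le: "e \<in> hmonos n k \<Longrightarrow> e i \<le> k"
  by (cases "i \<le> n") (auto simp: hmonos_def intro: member_le_sum[of i "{..n}" e, simplified])

lemma finite_hmonos: "finite (hmonos n k)"
  by (rule finite_subset[OF _ finite_set_of_finite_funs[of "{..n}" "{..k}" 0]])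
     (auto simp: hmonos_exponent_le hmonos_def)

lemma proj_pts_normalize:
  fixes p :: "nat \<Rightarrow> 'a :: field"
  assumes "\<exists>i\<le>n. p i \<noteq> 0"
  obtains l P where "P \<in> proj_pts n" and "\<forall>i\<le>n. p i = l * P i"
proof
  define j where "j = (LEAST i. p i \<noteq> 0)"
  have "\<exists>i. p i \<noteq> 0"
    using assms by blast
  then have "p j \<noteq> 0"
    unfolding j_def by (rule LeastI_ex)
  obtain i where "i \<le> n" "p i \<noteq> 0"
    using assms by blast
  then have "j \<le> n"
    unfolding j_def by (meson Least_le le_trans)
  have "\<forall>i<j. p i = 0"
    unfolding j_def using not_less_Least by blast
  show "(\<lambda>i. if i \<le> n then p i / p j else 0) \<in> proj_pts n"
    unfolding proj_pts_iff using \<open>p j \<noteq> 0\<close> \<open>j \<le> n\<close> \<open>\<forall>i<j. p i = 0\<close> by auto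
  show "\<forall>i\<le>n. p i = p j * (if i \<le> n then p i / p j else 0)"
    using \<open>p j \<noteq> 0\<close> by simp
qed

lemma mono_eval_cong:
  "(\<And>i. i \<le> n \<Longrightarrow> p i = p' i) \<Longrightarrow> mono_eval n e p = mono_eval n e p'"
  unfolding mono_eval_def by (intro prod.cong) auto

lemma mono_eval_scale:
  assumes "e \<in> hmonos n k"
  shows "mono_eval n e (\<lambda>i. l * p i) = l ^ k * mono_eval n e p"
proof -
  have "(\<Prod>i\<le>n. l ^ e i) = l ^ k"
    using assms by (simp add: power_sum[symmetric] hmonos_def)
  then show ?thesis
    by (simp add: mono_eval_def power_mult_distrib prod.distrib)
qed

lemma hom_eval_scale: "hom_eval n k c (\<lambda>i. l * p i) = l ^ k * hom_eval n k c p"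
  unfolding hom_eval_def sum_distrib_left
  by (intro sum.cong refl) (simp add: mono_eval_scale)

lemma hom_eval_eq_0_if_vanishes_on_proj_pts:
  assumes "k \<ge> 1" and "\<forall>P\<in>proj_pts n. hom_eval n k c P = 0"
  shows "hom_eval n k c p = 0"
proof (cases "\<exists>i\<le>n. p i \<noteq> 0")
  case True
  then obtain l P where "P \<in> proj_pts n" and p: "\<forall>i\<le>n. p i = l * P i"
    by (rule proj_pts_normalize)
  have "hom_eval n k c p = hom_eval n k c (\<lambda>i. l * P i)"
    unfolding hom_eval_def using p by (intro sum.cong refl arg_cong2[where f = "(*)"] mono_eval_cong) auto
  also have "\<dots> = 0"
    using assms(2) \<open>P \<in> proj_pts n\<close> by (simp add: hom_eval_scale)
  finally show ?thesis .
next
  case False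
  have "mono_eval n e p = 0" if "e \<in> hmonos n k" for e
  proof -
    have "(\<Sum>i\<le>n. e i) \<noteq> 0"
      using that assms(1) by (simp add: hmonos_def)
    then obtain i where "i \<in> {..n}" "e i \<noteq> 0"
      by (rule sum.not_neutral_contains_not_neutral)
    then show ?thesis
      using False unfolding mono_eval_def by (intro prod_zero) auto
  qed
  then show ?thesis
    by (simp add: hom_eval_def)
qed

lemma hom_eval_coeff_eq_0:
  fixes c :: "(nat \<Rightarrow> nat) \<Rightarrow> 'a :: {field,finite}"
  assumes "k \<ge> 1" and "k < CARD('a)" and "\<forall>P\<in>proj_pts n. hom_eval n k c P = 0"
    and "e \<in> hmonos n k"
  shows "c e = 0"
proof (rule coeff_eq_0_if_reduced_poly_fun_vanishes[where V = "{..n}" and A = "hmonos n k" and c = c and e = e])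
  show "inj_on (\<lambda>e. restrict e {..n}) (hmonos n k)"
  proof (rule inj_onI)
    fix e1 e2 assume "e1 \<in> hmonos n k" "e2 \<in> hmonos n k"
      and eq: "restrict e1 {..n} = restrict e2 {..n}"
    have "e1 i = e2 i" for i
      using fun_cong[OF eq, of i] \<open>e1 \<in> hmonos n k\<close> \<open>e2 \<in> hmonos n k\<close>
      by (cases "i \<le> n") (auto simp: hmonos_def)
    then show "e1 = e2" ..
  qed
  show "\<forall>e\<in>hmonos n k. \<forall>i\<in>{..n}. e i < CARD('a)"
    using hmonos_exponent_le assms(2) by (meson le_less_trans)
  show "\<forall>p. (\<Sum>e\<in>hmonos n k. c e * (\<Prod>i\<in>{..n}. p i ^ e i)) = 0"
    using hom_eval_eq_0_if_vanishes_on_proj_pts[OF assms(1,3)]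
    by (simp add: hom_eval_def mono_eval_def)
qed (simp_all add: assms(4) finite_hmonos)

section \<open>The dot product of two codewords\<close>

abbreviation last_pt :: "nat \<Rightarrow> nat \<Rightarrow> 'a :: field" where
  "last_pt n \<equiv> \<lambda>i. if i = n then 1 else 0"

abbreviation last_mono :: "nat \<Rightarrow> nat \<Rightarrow> nat \<Rightarrow> nat" where
  "last_mono n k \<equiv> \<lambda>i. if i = n then k else 0"

lemma last_pt_in_proj_pts: "last_pt n \<in> proj_pts n"
  unfolding proj_pts_iff by (intro conjI exI[of _ n]) auto

lemma last_mono_in_hmonos: "last_mono n k \<in> hmonos n k"
  by (simp add: hmonos_def)

lemma proj_pts_upd_last:
  assumes "P \<in> proj_pts n" and "P \<noteq> last_pt n"
  shows "P(n := t) \<in> proj_pts n \<and> P(n := t) \<noteq> last_pt n"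
proof -
  obtain j where j: "\<forall>i>n. P i = 0" "j \<le> n" "P j = 1" "\<forall>i<j. P i = 0"
    using assms(1) unfolding proj_pts_iff by blast
  have "j \<noteq> n"
  proof
    assume "j = n"
    with j have "P = last_pt n"
      by (auto simp: fun_eq_iff) (metis linorder_neqE_nat)
    with assms(2) show False ..
  qed
  with j show ?thesis
    unfolding proj_pts_iff by (auto simp: fun_eq_iff intro!: exI[of _ j])
qed

lemma sum_proj_pts_split_last:
  fixes f :: "(nat \<Rightarrow> 'a :: {field,finite}) \<Rightarrow> 'b :: comm_monoid_add"
  shows "(\<Sum>P\<in>proj_pts n. f P)
    = f (last_pt n) + (\<Sum>P\<in>{P \<in> proj_pts n. P n = 0}. \<Sum>t\<in>UNIV. f (P(n := t)))"
proof -
  have ne_last_pt: "P \<noteq> last_pt n" if "P n = 0" for P :: "nat \<Rightarrow> 'a"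
    using that by (auto simp: fun_eq_iff)
  have "(\<Sum>P\<in>proj_pts n. f P) = f (last_pt n) + (\<Sum>P\<in>proj_pts n - {last_pt n}. f P)"
    by (rule sum.remove[OF finite_proj_pts last_pt_in_proj_pts])
  also have "(\<Sum>P\<in>proj_pts n - {last_pt n}. f P)
      = (\<Sum>(P, t)\<in>{P \<in> proj_pts n. P n = 0} \<times> UNIV. f (P(n := t)))"
    by (rule sum.reindex_bij_witness[of _ "\<lambda>(P, t). P(n := t)" "\<lambda>P. (P(n := 0), P n)"])
       (auto simp: proj_pts_upd_last ne_last_pt dest: proj_pts_upd_last[where t = 0])
  also have "\<dots> = (\<Sum>P\<in>{P \<in> proj_pts n. P n = 0}. \<Sum>t\<in>UNIV. f (P(n := t)))"
    by (rule sum.cartesian_product[symmetric])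
  finally show ?thesis .
qed

lemma mono_eval_split_last: "mono_eval n e p = (\<Prod>i<n. p i ^ e i) * p n ^ e n"
  by (simp add: mono_eval_def lessThan_Suc_atMost[symmetric])

lemma sum_proj_pts_mono_eval:
  assumes "a n < CARD('a) - 1"
  shows "(\<Sum>P\<in>proj_pts n. mono_eval n a P) = (if \<forall>i<n. a i = 0 then 1 else 0 :: 'a :: {field,finite})"
proof -
  have "(\<Sum>t\<in>UNIV. mono_eval n a (P(n := t))) = 0" for P :: "nat \<Rightarrow> 'a"
    using sum_UNIV_power_eq_0[OF assms]
    by (simp add: mono_eval_split_last sum_distrib_left[symmetric])
  moreover have "mono_eval n a (last_pt n) = (if \<forall>i<n. a i = 0 then 1 else 0 :: 'a)"
    by (auto simp: mono_eval_split_last)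
  ultimately show ?thesis
    by (simp add: sum_proj_pts_split_last)
qed

lemma hmonos_last_mono_iff:
  assumes "e \<in> hmonos n k"
  shows "(\<forall>i<n. e i = 0) \<longleftrightarrow> e = last_mono n k"
proof
  assume low: "\<forall>i<n. e i = 0"
  then have "e n = k"
    using assms by (simp add: hmonos_def lessThan_Suc_atMost[symmetric])
  with low assms show "e = last_mono n k"
    by (auto simp: hmonos_def fun_eq_iff) (metis linorder_neqE_nat)
qed auto

lemma sum_proj_pts_mono_eval_mult:
  assumes "e \<in> hmonos n k" and "e' \<in> hmonos n k" and "2 * k < CARD('a) - 1"
  shows "(\<Sum>P\<in>proj_pts n. mono_eval n e P * mono_eval n e' P)
    = (if e = last_mono n k \<and> e' = last_mono n k then 1 else 0 :: 'a :: {field,finite})"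
proof -
  have "mono_eval n e P * mono_eval n e' P = mono_eval n (\<lambda>i. e i + e' i) P" for P :: "nat \<Rightarrow> 'a"
    by (simp add: mono_eval_def power_add prod.distrib)
  moreover have "e n + e' n < CARD('a) - 1"
    using hmonos_exponent_le[OF assms(1), of n] hmonos_exponent_le[OF assms(2), of n] assms(3) by linarith
  ultimately show ?thesis
    using hmonos_last_mono_iff[OF assms(1)] hmonos_last_mono_iff[OF assms(2)]
    by (simp add: sum_proj_pts_mono_eval) blast
qed

lemma dotp_ev_hom_eval:
  assumes "2 * k < CARD('a) - 1"
  shows "dotp n (ev n (hom_eval n k c1)) (ev n (hom_eval n k c2) :: (nat \<Rightarrow> 'a :: {field,finite}) \<Rightarrow> 'a)
    = c1 (last_mono n k) * c2 (last_mono n k)"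
proof -
  let ?M = "hmonos n k" and ?L = "last_mono n k"
  have "dotp n (ev n (hom_eval n k c1)) (ev n (hom_eval n k c2) :: (nat \<Rightarrow> 'a) \<Rightarrow> 'a)
      = (\<Sum>P\<in>proj_pts n. \<Sum>e\<in>?M. \<Sum>e'\<in>?M. c1 e * c2 e' * (mono_eval n e P * mono_eval n e' P))"
    by (simp add: dotp_def ev_def hom_eval_def sum_product mult_ac)
  also have "\<dots> = (\<Sum>e\<in>?M. \<Sum>e'\<in>?M. c1 e * c2 e' * (\<Sum>P\<in>proj_pts n. mono_eval n e P * mono_eval n e' P))"
    by (simp add: sum_distrib_left sum.swap[of _ "proj_pts n"])
  also have "\<dots> = (\<Sum>e\<in>?M. \<Sum>e'\<in>?M. if e' = ?L then if e = ?L then c1 e * c2 e' else 0 else 0)"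
    using assms by (intro sum.cong refl) (simp add: sum_proj_pts_mono_eval_mult)
  also have "\<dots> = c1 ?L * c2 ?L"
    by (simp add: finite_hmonos last_mono_in_hmonos)
  finally show ?thesis .
qed

section \<open>Bases of the code and of its hull\<close>

context vector_space
begin

lemma span_image_iff_sum:
  assumes "finite S"
  shows "x \<in> span (f ` S) \<longleftrightarrow> (\<exists>w. x = (\<Sum>e\<in>S. w e *s f e))"
proof
  assume "x \<in> span (f ` S)"
  then show "\<exists>w. x = (\<Sum>e\<in>S. w e *s f e)"
  proof (induction rule: span_induct_alt)
    case base
    show ?case by (intro exI[of _ "\<lambda>_. 0"]) simp
  next
    case (step c y z)
    then obtain e0 w where "e0 \<in> S" "y = f e0" "z = (\<Sum>e\<in>S. w e *s f e)"
      by blast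
    then have "c *s y + z = (\<Sum>e\<in>S. ((if e = e0 then c else 0) + w e) *s f e)"
      using assms by (simp add: scale_left_distrib sum.distrib if_distrib[of "\<lambda>a. a *s f _"] cong: if_cong)
    then show ?case
      by (rule exI[where x = "\<lambda>e. (if e = e0 then c else 0) + w e"])
  qed
next
  assume "\<exists>w. x = (\<Sum>e\<in>S. w e *s f e)"
  then show "x \<in> span (f ` S)"
    by (auto intro!: span_sum span_scale intro: span_base)
qed

lemma inj_on_if_coeffs_vanish:
  assumes "finite S" and "\<And>w. (\<Sum>e\<in>S. w e *s f e) = 0 \<Longrightarrow> \<forall>e\<in>S. w e = 0"
  shows "inj_on f S"
proof (rule inj_onI, rule ccontr)
  fix e1 e2 assume "e1 \<in> S" "e2 \<in> S" "f e1 = f e2" "e1 \<noteq> e2"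
  define w :: "_ \<Rightarrow> 'a" where "w e = (if e = e1 then 1 else 0) - (if e = e2 then 1 else 0)" for e
  have "(\<Sum>e\<in>S. w e *s f e) = f e1 - f e2"
    using assms(1) \<open>e1 \<in> S\<close> \<open>e2 \<in> S\<close>
    by (simp add: w_def scale_left_diff_distrib sum_subtractf if_distrib[of "\<lambda>a. a *s f _"] cong: if_cong)
  with \<open>f e1 = f e2\<close> have "w e1 = 0"
    using assms(2) \<open>e1 \<in> S\<close> by simp
  with \<open>e1 \<noteq> e2\<close> show False
    by (simp add: w_def)
qed

lemma independent_image_if_coeffs_vanish:
  assumes "finite S" and coeffs: "\<And>w. (\<Sum>e\<in>S. w e *s f e) = 0 \<Longrightarrow> \<forall>e\<in>S. w e = 0"
  shows "independent (f ` S)"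
proof
  assume "dependent (f ` S)"
  then obtain u v where "v \<in> f ` S" "u v \<noteq> 0" and "(\<Sum>v\<in>f ` S. u v *s v) = 0"
    using dependent_finite[OF finite_imageI[OF assms(1)]] by blast
  moreover have "(\<Sum>v\<in>f ` S. u v *s v) = (\<Sum>e\<in>S. u (f e) *s f e)"
    using sum.reindex[OF inj_on_if_coeffs_vanish[OF assms]] by (simp add: comp_def)
  ultimately show False
    using coeffs[of "u \<circ> f"] by auto
qed

end

interpretation fscale: vector_space "fscale :: 'a :: field \<Rightarrow> ('b \<Rightarrow> 'a) \<Rightarrow> 'b \<Rightarrow> 'a"
  by (rule vector_space_fscale)

abbreviation ev_mono :: "nat \<Rightarrow> (nat \<Rightarrow> nat) \<Rightarrow> (nat \<Rightarrow> 'a :: field) \<Rightarrow> 'a" where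
  "ev_mono n \<equiv> \<lambda>e. ev n (mono_eval n e)"

lemma sum_fun_apply: "(\<Sum>e\<in>S. f e) x = (\<Sum>e\<in>S. f e x)"
  by (induction S rule: infinite_finite_induct) auto

lemma ev_hom_eval_eq_sum:
  assumes "S \<subseteq> hmonos n k" and "\<forall>e\<in>hmonos n k - S. c e = 0"
  shows "ev n (hom_eval n k c) = (\<Sum>e\<in>S. fscale (c e) (ev_mono n e))"
proof -
  have "hom_eval n k c = (\<lambda>P. \<Sum>e\<in>S. c e * mono_eval n e P)"
    unfolding hom_eval_def using assms finite_hmonos
    by (intro ext sum.mono_neutral_right) auto
  then show ?thesis
    by (auto simp: ev_def fscale_def sum_fun_apply)
qed

lemma ev_mono_coeffs_vanish:
  fixes w :: "(nat \<Rightarrow> nat) \<Rightarrow> 'a :: {field,finite}"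
  assumes "1 \<le> k" and "k < CARD('a)" and "S \<subseteq> hmonos n k"
    and "(\<Sum>e\<in>S. fscale (w e) (ev_mono n e)) = 0"
  shows "\<forall>e\<in>S. w e = 0"
proof
  fix e assume "e \<in> S"
  define c where "c e = (if e \<in> S then w e else 0)" for e
  have "ev n (hom_eval n k c) = (\<Sum>e\<in>S. fscale (w e) (ev_mono n e))"
    using ev_hom_eval_eq_sum[OF assms(3), of c] by (simp add: c_def)
  then have "ev n (hom_eval n k c) = 0"
    using assms(4) by simp
  have "\<forall>P\<in>proj_pts n. hom_eval n k c P = 0"
  proof
    fix P :: "nat \<Rightarrow> 'a" assume "P \<in> proj_pts n"
    then show "hom_eval n k c P = 0"
      using fun_cong[OF \<open>ev n (hom_eval n k c) = 0\<close>, of P] by (simp add: ev_def)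
  qed
  then have "c e = 0"
    using hom_eval_coeff_eq_0 assms(1,2,3) \<open>e \<in> S\<close> by blast
  with \<open>e \<in> S\<close> show "w e = 0"
    by (simp add: c_def)
qed

lemma span_ev_mono:
  assumes "S \<subseteq> hmonos n k"
  shows "fscale.span (ev_mono n ` S)
    = {ev n (hom_eval n k c) :: (nat \<Rightarrow> 'a :: {field,finite}) \<Rightarrow> 'a | c. \<forall>e\<in>hmonos n k - S. c e = 0}"
    (is "_ = ?C")
proof -
  have "finite S"
    using assms finite_hmonos by (rule finite_subset)
  show ?thesis
  proof (intro set_eqI iffI)
    fix x :: "(nat \<Rightarrow> 'a) \<Rightarrow> 'a"
    assume "x \<in> fscale.span (ev_mono n ` S)"
    then obtain w where "x = (\<Sum>e\<in>S. fscale (w e) (ev_mono n e))"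
      unfolding fscale.span_image_iff_sum[OF \<open>finite S\<close>] ..
    then have "x = ev n (hom_eval n k (\<lambda>e. if e \<in> S then w e else 0))"
      by (subst ev_hom_eval_eq_sum[OF assms]) auto
    then show "x \<in> ?C"
      by auto
  next
    fix x :: "(nat \<Rightarrow> 'a) \<Rightarrow> 'a"
    assume "x \<in> ?C"
    then obtain c where "x = ev n (hom_eval n k c)" "\<forall>e\<in>hmonos n k - S. c e = 0"
      by blast
    then have "x = (\<Sum>e\<in>S. fscale (c e) (ev_mono n e))"
      using ev_hom_eval_eq_sum[OF assms] by simp
    then show "x \<in> fscale.span (ev_mono n ` S)"
      unfolding fscale.span_image_iff_sum[OF \<open>finite S\<close>] by (rule exI[where x = c])
  qed
qed

lemma PRM_eq_span: "PRM n k = fscale.span (ev_mono n ` hmonos n k :: ((nat \<Rightarrow> 'a :: {field,finite}) \<Rightarrow> 'a) set)"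
  unfolding PRM_def span_ev_mono[OF subset_refl] by simp

lemma code_hull_PRM:
  assumes "2 * k + 1 < CARD('a)"
  shows "code_hull n (PRM n k :: ((nat \<Rightarrow> 'a :: {field,finite}) \<Rightarrow> 'a) set)
    = {ev n (hom_eval n k c) | c. c (last_mono n k) = 0}"
    (is "_ = ?C")
proof -
  have q: "2 * k < CARD('a) - 1"
    using assms by linarith
  show ?thesis
  proof (intro set_eqI iffI)
    fix x :: "(nat \<Rightarrow> 'a) \<Rightarrow> 'a"
    assume x: "x \<in> code_hull n (PRM n k)"
    then obtain c where c: "x = ev n (hom_eval n k c)"
      by (auto simp: code_hull_def PRM_def)
    define \<delta> :: "(nat \<Rightarrow> nat) \<Rightarrow> 'a" where "\<delta> e = (if e = last_mono n k then 1 else 0)" for e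
    have "ev n (hom_eval n k \<delta>) \<in> PRM n k"
      by (auto simp: PRM_def)
    with x have "dotp n (ev n (hom_eval n k \<delta>)) x = 0"
      by (auto simp: code_hull_def dual_code_def)
    with c have "c (last_mono n k) = 0"
      by (simp add: dotp_ev_hom_eval[OF q] \<delta>_def)
    with c show "x \<in> ?C"
      by blast
  next
    fix x :: "(nat \<Rightarrow> 'a) \<Rightarrow> 'a"
    assume "x \<in> ?C"
    then obtain c where c: "x = ev n (hom_eval n k c)" "c (last_mono n k) = 0"
      by blast
    have "dotp n u x = 0" if "u \<in> PRM n k" for u
      using that c by (auto simp: PRM_def dotp_ev_hom_eval[OF q])
    moreover have "x \<in> PRM n k" "x \<in> words n"
      using c by (auto simp: PRM_def words_def ev_def)
    ultimately show "x \<in> code_hull n (PRM n k)"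
      by (simp add: code_hull_def dual_code_def)
  qed
qed

lemma code_hull_PRM_eq_span:
  assumes "2 * k + 1 < CARD('a)"
  shows "code_hull n (PRM n k)
    = fscale.span (ev_mono n ` (hmonos n k - {last_mono n k}) :: ((nat \<Rightarrow> 'a :: {field,finite}) \<Rightarrow> 'a) set)"
proof -
  have "hmonos n k - (hmonos n k - {last_mono n k}) = {last_mono n k}"
    using last_mono_in_hmonos by blast
  then show ?thesis
    unfolding code_hull_PRM[OF assms] span_ev_mono[OF Diff_subset] by simp
qed

lemma ev_mono_basis:
  assumes "1 \<le> k" and "k < CARD('a)" and "S \<subseteq> hmonos n k"
  shows "inj_on (ev_mono n :: _ \<Rightarrow> (nat \<Rightarrow> 'a :: {field,finite}) \<Rightarrow> 'a) S
    \<and> fscale.independent (ev_mono n ` S :: ((nat \<Rightarrow> 'a) \<Rightarrow> 'a) set)"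
proof -
  have "finite S"
    using assms(3) finite_hmonos by (rule finite_subset)
  note coeffs = ev_mono_coeffs_vanish[OF assms]
  show ?thesis
    using fscale.inj_on_if_coeffs_vanish[OF \<open>finite S\<close> coeffs]
      fscale.independent_image_if_coeffs_vanish[OF \<open>finite S\<close> coeffs] ..
qed

lemma dim_span_ev_mono:
  assumes "1 \<le> k" and "k < CARD('a)" and "S \<subseteq> hmonos n k"
  shows "fscale.dim (fscale.span (ev_mono n ` S :: ((nat \<Rightarrow> 'a :: {field,finite}) \<Rightarrow> 'a) set)) = card S"
  using ev_mono_basis[OF assms] by (simp add: fscale.dim_eq_card_independent card_image)

lemma hmonos_Suc:
  "hmonos (Suc n) k = (\<Union>d\<le>k. (\<lambda>e. e(Suc n := d)) ` hmonos n (k - d))"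
proof (intro equalityI subsetI)
  fix e assume e: "e \<in> hmonos (Suc n) k"
  then have "e (Suc n) \<le> k" "e(Suc n := 0) \<in> hmonos n (k - e (Suc n))"
    by (auto simp: hmonos_def hmonos_exponent_le)
  moreover have "e = (e(Suc n := 0))(Suc n := e (Suc n))"
    by simp
  ultimately show "e \<in> (\<Union>d\<le>k. (\<lambda>e. e(Suc n := d)) ` hmonos n (k - d))"
    by blast
next
  fix e assume "e \<in> (\<Union>d\<le>k. (\<lambda>e. e(Suc n := d)) ` hmonos n (k - d))"
  then show "e \<in> hmonos (Suc n) k"
    by (auto simp: hmonos_def)
qed

lemma card_hmonos: "card (hmonos n k) = (n + k choose k)"
proof (induction n arbitrary: k)
  case 0
  have "hmonos 0 k = {last_mono 0 k}"
    by (auto simp: hmonos_def fun_eq_iff)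
  then show ?case by simp
next
  case (Suc n)
  have "e(Suc n := 0) = e" if "e \<in> hmonos n j" for e j
    using that by (intro fun_upd_idem) (simp add: hmonos_def)
  then have inj: "inj_on (\<lambda>e. e(Suc n := d)) (hmonos n j)" for d j
    by (intro inj_onI) (metis fun_upd_upd)
  have "card (hmonos (Suc n) k) = (\<Sum>d\<le>k. card ((\<lambda>e. e(Suc n := d)) ` hmonos n (k - d)))"
    unfolding hmonos_Suc
    by (rule card_UN_disjoint) (auto simp: finite_hmonos dest: fun_cong[of _ _ "Suc n"])
  also have "\<dots> = (\<Sum>d\<le>k. n + (k - d) choose (k - d))"
    by (simp add: card_image[OF inj] Suc.IH)
  also have "\<dots> = (\<Sum>j\<le>k. n + j choose j)"
    by (rule sum.reindex_bij_witness[of _ "\<lambda>j. k - j" "\<lambda>j. k - j"]) auto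
  also have "\<dots> = Suc n + k choose k"
    by (simp add: sum_choose_lower)
  finally show ?case .
qed

theorem mainTheorem8:
  fixes n k :: nat
  assumes "n \<ge> 1" and "k \<ge> 1"
    and "card (UNIV :: 'a set) > 2 * k + 1"
  shows "vector_space.dim fscale (code_hull n (PRM n k :: ((nat \<Rightarrow> 'a::{field,finite}) \<Rightarrow> 'a) set))
           = vector_space.dim fscale (PRM n k :: ((nat \<Rightarrow> 'a) \<Rightarrow> 'a) set) - 1
       \<and> vector_space.dim fscale (PRM n k :: ((nat \<Rightarrow> 'a) \<Rightarrow> 'a) set) - 1
           = (n + k choose k) - 1
       \<and> inj_on (\<lambda>m. ev n (mono_eval n m) :: (nat \<Rightarrow> 'a) \<Rightarrow> 'a) (hmonos n k - {(\<lambda>i. if i = n then k else 0)})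
       \<and> module.independent fscale
           ((\<lambda>m. ev n (mono_eval n m) :: (nat \<Rightarrow> 'a) \<Rightarrow> 'a) ` (hmonos n k - {(\<lambda>i. if i = n then k else 0)}))
       \<and> module.span fscale
           ((\<lambda>m. ev n (mono_eval n m) :: (nat \<Rightarrow> 'a) \<Rightarrow> 'a) ` (hmonos n k - {(\<lambda>i. if i = n then k else 0)}))
           = code_hull n (PRM n k)"
proof -
  have k: "1 \<le> k" "k < CARD('a)"
    using assms(2,3) by auto
  let ?M' = "hmonos n k - {last_mono n k}"
  have "fscale.dim (PRM n k :: ((nat \<Rightarrow> 'a) \<Rightarrow> 'a) set) = card (hmonos n k)"
    unfolding PRM_eq_span using dim_span_ev_mono[OF k subset_refl] .
  moreover have "fscale.dim (code_hull n (PRM n k) :: ((nat \<Rightarrow> 'a) \<Rightarrow> 'a) set) = card ?M'"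
    unfolding code_hull_PRM_eq_span[OF assms(3)] using dim_span_ev_mono[OF k Diff_subset] .
  moreover have "card ?M' = (n + k choose k) - 1"
    by (simp add: card_hmonos card_Diff_singleton finite_hmonos last_mono_in_hmonos)
  ultimately show ?thesis
    using ev_mono_basis[OF k Diff_subset] code_hull_PRM_eq_span[OF assms(3)]
    by (simp add: card_hmonos)
qed

end
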